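(* Let $\mathcal A$ be an $\mathbf{HpsUL}^\ast_\omega$-algebra. Then: (i) for all $x,y\in A$, $xy\le e$ iff $xy^2\le e$; (ii) for all $x_1,\dots,x_n\in A$ and all $k_1,\dots,k_n,l_1,\dots,l_n\in\mathbb Z_+$, $x_1^{k_1}\cdots x_n^{k_n}\le e$ iff $x_1^{l_1}\cdots x_n^{l_n}\le e$.
   Context: An $\mathbf{HpsUL}$-algebra is a structure $\mathcal A=\langle A,\wedge,\vee,\cdot,\backslash,/,e,f,\bot,\top\rangle$ such that: - $\langle A,\wedge,\vee,\bot,\top\rangle$ is a bounded lattice; - $\langle A,\cdot,e\rangle$ is a monoid; - for all $x,y,z$: $xy\le z$ iff $x\le z/y$ iff $y\le x\backslash z$; - for all $x,y,u,v$: $\lambda_u((x\vee y)\backslash x)\vee\rho_v((x\vee y)\backslash y)=e$, where $\lambda_a(b)=(a\backslash (ba))\wedge e$ and $\rho_a(b)=((ab)/a)\wedge e$. The constant $f$ is arbitrary. An $\mathbf{HpsUL}^\ast$-algebra is an $\mathbf{HpsUL}$-algebra satisfying weak commutativity: $xy\le e$ implies $yx\le e$. An $\mathbf{HpsUL}^\ast_\omega$-algebra is an $\mathbf{HpsUL}^\ast$-algebra satisfying $x\backslash e=x^2\backslash e$ for all $x$. Powers: $x^0=e$, $x^{n+1}=x^n\cdot x$. $\mathbb Z_+$ is the set of positive integers. *)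

theory Defs
  imports Main
begin

text \<open>An algebra is given on the whole type 'a by its operations:
 meet, join, multiplication, left residual (x \ z, ldiv x z), right residual (z / y, rdiv z y),
 unit e, arbitrary constant f, bottom, tp.\<close>

definition lat_le :: "('a \<Rightarrow> 'a \<Rightarrow> 'a) \<Rightarrow> 'a \<Rightarrow> 'a \<Rightarrow> bool" where
  "lat_le meet x y \<longleftrightarrow> meet x y = x"

definition bounded_lattice_ops ::
  "('a \<Rightarrow> 'a \<Rightarrow> 'a) \<Rightarrow> ('a \<Rightarrow> 'a \<Rightarrow> 'a) \<Rightarrow> 'a \<Rightarrow> 'a \<Rightarrow> bool" where
  "bounded_lattice_ops meet join bt tp \<longleftrightarrow>
     (\<forall>x y z. meet x (meet y z) = meet (meet x y) z) \<and>
     (\<forall>x y z. join x (join y z) = join (join x y) z) \<and>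
     (\<forall>x y. meet x y = meet y x) \<and>
     (\<forall>x y. join x y = join y x) \<and>
     (\<forall>x y. meet x (join x y) = x) \<and>
     (\<forall>x y. join x (meet x y) = x) \<and>
     (\<forall>x. meet bt x = bt) \<and>
     (\<forall>x. join tp x = tp)"

definition monoid_ops :: "('a \<Rightarrow> 'a \<Rightarrow> 'a) \<Rightarrow> 'a \<Rightarrow> bool" where
  "monoid_ops mult e \<longleftrightarrow>
     (\<forall>x y z. mult (mult x y) z = mult x (mult y z)) \<and>
     (\<forall>x. mult e x = x) \<and> (\<forall>x. mult x e = x)"

definition HpsUL ::
  "('a \<Rightarrow> 'a \<Rightarrow> 'a) \<Rightarrow> ('a \<Rightarrow> 'a \<Rightarrow> 'a) \<Rightarrow> ('a \<Rightarrow> 'a \<Rightarrow> 'a) \<Rightarrow>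
   ('a \<Rightarrow> 'a \<Rightarrow> 'a) \<Rightarrow> ('a \<Rightarrow> 'a \<Rightarrow> 'a) \<Rightarrow> 'a \<Rightarrow> 'a \<Rightarrow> 'a \<Rightarrow> 'a \<Rightarrow> bool" where
  "HpsUL meet join mult ldiv rdiv e f bt tp \<longleftrightarrow>
     bounded_lattice_ops meet join bt tp \<and>
     monoid_ops mult e \<and>
     (\<forall>x y z. (lat_le meet (mult x y) z \<longleftrightarrow> lat_le meet x (rdiv z y)) \<and>
              (lat_le meet x (rdiv z y) \<longleftrightarrow> lat_le meet y (ldiv x z))) \<and>
     (\<forall>x y u v.
        join (meet (ldiv u (mult (ldiv (join x y) x) u)) e)
             (meet (rdiv (mult v (ldiv (join x y) y)) v) e) = e)"

definition HpsUL_star ::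
  "('a \<Rightarrow> 'a \<Rightarrow> 'a) \<Rightarrow> ('a \<Rightarrow> 'a \<Rightarrow> 'a) \<Rightarrow> ('a \<Rightarrow> 'a \<Rightarrow> 'a) \<Rightarrow>
   ('a \<Rightarrow> 'a \<Rightarrow> 'a) \<Rightarrow> ('a \<Rightarrow> 'a \<Rightarrow> 'a) \<Rightarrow> 'a \<Rightarrow> 'a \<Rightarrow> 'a \<Rightarrow> 'a \<Rightarrow> bool" where
  "HpsUL_star meet join mult ldiv rdiv e f bt tp \<longleftrightarrow>
     HpsUL meet join mult ldiv rdiv e f bt tp \<and>
     (\<forall>x y. lat_le meet (mult x y) e \<longrightarrow> lat_le meet (mult y x) e)"

primrec mpow :: "('a \<Rightarrow> 'a \<Rightarrow> 'a) \<Rightarrow> 'a \<Rightarrow> 'a \<Rightarrow> nat \<Rightarrow> 'a" where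
  "mpow mult e x 0 = e"
| "mpow mult e x (Suc n) = mult (mpow mult e x n) x"

definition HpsUL_star_omega ::
  "('a \<Rightarrow> 'a \<Rightarrow> 'a) \<Rightarrow> ('a \<Rightarrow> 'a \<Rightarrow> 'a) \<Rightarrow> ('a \<Rightarrow> 'a \<Rightarrow> 'a) \<Rightarrow>
   ('a \<Rightarrow> 'a \<Rightarrow> 'a) \<Rightarrow> ('a \<Rightarrow> 'a \<Rightarrow> 'a) \<Rightarrow> 'a \<Rightarrow> 'a \<Rightarrow> 'a \<Rightarrow> 'a \<Rightarrow> bool" where
  "HpsUL_star_omega meet join mult ldiv rdiv e f bt tp \<longleftrightarrow>
     HpsUL_star meet join mult ldiv rdiv e f bt tp \<and>
     (\<forall>x. ldiv x e = ldiv (mpow mult e x 2) e)"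

fun mprod_pows :: "('a \<Rightarrow> 'a \<Rightarrow> 'a) \<Rightarrow> 'a \<Rightarrow> 'a list \<Rightarrow> nat list \<Rightarrow> 'a" where
  "mprod_pows mult e (x # xs) (k # ks) = mult (mpow mult e x k) (mprod_pows mult e xs ks)"
| "mprod_pows mult e _ _ = e"

end

theory Submission
  imports Defs
begin

text \<open>Only the predicate \<open>z \<le> e\<close> matters. Weak commutativity makes it invariant under
  cyclic rotation of a product, and residuation turns the \<open>\<omega>\<close>-axiom
  \<open>y\<setminus>e = y\<^sup>2\<setminus>e\<close> into \<open>y x \<le> e \<longleftrightarrow> y\<^sup>2 x \<le> e\<close>. Rotating any factor to the front, a square
  can therefore be created or removed anywhere inside a product; iterating, every power
  \<open>y\<^sup>n\<close> with \<open>n \<ge> 1\<close> may be replaced by \<open>y\<close>, so all positive exponents are interchangeable.\<close>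

locale rotation_square_invariant =
  fixes mult :: "'a \<Rightarrow> 'a \<Rightarrow> 'a" and e :: 'a and P :: "'a \<Rightarrow> bool"
  assumes monoid: "monoid_ops mult e"
    and P_rotate: "P (mult x y) \<Longrightarrow> P (mult y x)"
    and P_square_left: "P (mult y x) \<longleftrightarrow> P (mult (mult y y) x)"
begin

lemma assoc: "mult (mult x y) z = mult x (mult y z)"
  using monoid by (simp add: monoid_ops_def)

lemma left_unit: "mult e x = x"
  using monoid by (simp add: monoid_ops_def)

lemma mpow_2: "mpow mult e y 2 = mult y y"
  by (simp add: numeral_2_eq_2 left_unit)

lemma P_rotate_iff: "P (mult x y) \<longleftrightarrow> P (mult y x)"
  using P_rotate by blast

lemma P_square_right: "P (mult x y) \<longleftrightarrow> P (mult x (mpow mult e y 2))"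
  using P_rotate_iff P_square_left by (metis mpow_2)

lemma P_square_inside: "P (mult a (mult y b)) \<longleftrightarrow> P (mult a (mult (mult y y) b))"
proof -
  have "P (mult a (mult y b)) \<longleftrightarrow> P (mult y (mult b a))"
    using P_rotate_iff[of a "mult y b"] by (simp add: assoc)
  also have "\<dots> \<longleftrightarrow> P (mult (mult y y) (mult b a))"
    by (rule P_square_left)
  also have "\<dots> \<longleftrightarrow> P (mult a (mult (mult y y) b))"
    using P_rotate_iff[of a "mult (mult y y) b"] by (simp add: assoc)
  finally show ?thesis .
qed

lemma P_power_inside: "P (mult a (mult (mpow mult e y (Suc n)) b)) \<longleftrightarrow> P (mult a (mult y b))"
proof (induction n arbitrary: a)
  case 0
  show ?case by (simp add: left_unit)
next
  case (Suc n)
  have "P (mult a (mult (mpow mult e y (Suc (Suc n))) b))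
      \<longleftrightarrow> P (mult (mult a (mpow mult e y n)) (mult (mult y y) b))"
    by (simp add: assoc)
  also have "\<dots> \<longleftrightarrow> P (mult (mult a (mpow mult e y n)) (mult y b))"
    by (rule P_square_inside[symmetric])
  also have "\<dots> \<longleftrightarrow> P (mult a (mult (mpow mult e y (Suc n)) b))"
    by (simp add: assoc)
  also have "\<dots> \<longleftrightarrow> P (mult a (mult y b))"
    by (rule Suc.IH)
  finally show ?case .
qed

lemma P_mprod_pows_positive_exponents:
  assumes "length ks = length xs" "length ls = length xs"
    and "\<forall>k\<in>set ks. 0 < k" "\<forall>l\<in>set ls. 0 < l"
  shows "P (mult a (mprod_pows mult e xs ks)) \<longleftrightarrow> P (mult a (mprod_pows mult e xs ls))"
  using assms
proof (induction xs arbitrary: a ks ls)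
  case Nil
  then show ?case by simp
next
  case (Cons x xs)
  obtain k ks' l ls' where ks: "ks = Suc k # ks'" and ls: "ls = Suc l # ls'"
    using Cons.prems by (cases ks; cases ls) (auto simp: gr0_conv_Suc)
  have "P (mult a (mprod_pows mult e (x # xs) ks))
      \<longleftrightarrow> P (mult (mult a x) (mprod_pows mult e xs ks'))"
    using P_power_inside[of a x k] by (simp add: ks assoc)
  also have "\<dots> \<longleftrightarrow> P (mult (mult a x) (mprod_pows mult e xs ls'))"
    using Cons.prems by (intro Cons.IH) (auto simp: ks ls)
  also have "\<dots> \<longleftrightarrow> P (mult a (mprod_pows mult e (x # xs) ls))"
    using P_power_inside[of a x l] by (simp add: ls assoc)
  finally show ?case .
qed

lemma P_mprod_pows_iff:
  assumes "length ks = length xs" "length ls = length xs"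
    and "\<forall>k\<in>set ks. 0 < k" "\<forall>l\<in>set ls. 0 < l"
  shows "P (mprod_pows mult e xs ks) \<longleftrightarrow> P (mprod_pows mult e xs ls)"
  using P_mprod_pows_positive_exponents[OF assms, of e] by (simp add: left_unit)

end

lemma HpsUL_star_omega_below_unit_invariant:
  assumes "HpsUL_star_omega meet join mult ldiv rdiv e f bt tp"
  shows "rotation_square_invariant mult e (\<lambda>z. lat_le meet z e)"
proof
  have HpsUL: "HpsUL meet join mult ldiv rdiv e f bt tp"
    using assms by (simp add: HpsUL_star_omega_def HpsUL_star_def)
  then show monoid: "monoid_ops mult e"
    by (simp add: HpsUL_def)
  show "lat_le meet (mult x y) e \<Longrightarrow> lat_le meet (mult y x) e" for x y
    using assms by (simp add: HpsUL_star_omega_def HpsUL_star_def)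
  have residuation: "lat_le meet (mult y x) z \<longleftrightarrow> lat_le meet x (ldiv y z)" for x y z
    using HpsUL by (simp add: HpsUL_def)
  have omega: "ldiv y e = ldiv (mult y y) e" for y
    using assms monoid by (simp add: HpsUL_star_omega_def monoid_ops_def numeral_2_eq_2)
  show "lat_le meet (mult y x) e \<longleftrightarrow> lat_le meet (mult (mult y y) x) e" for x y
    by (simp add: residuation omega[of y])
qed

theorem lemma2p4:
  fixes meet join mult ldiv rdiv :: "'a \<Rightarrow> 'a \<Rightarrow> 'a" and e f bt tp :: 'a
  assumes "HpsUL_star_omega meet join mult ldiv rdiv e f bt tp"
  shows "(\<forall>x y. lat_le meet (mult x y) e \<longleftrightarrow> lat_le meet (mult x (mpow mult e y 2)) e)
       \<and> (\<forall>(xs :: 'a list) (ks :: nat list) (ls :: nat list).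
            length ks = length xs \<longrightarrow> length ls = length xs \<longrightarrow>
            (\<forall>k\<in>set ks. 0 < k) \<longrightarrow> (\<forall>l\<in>set ls. 0 < l) \<longrightarrow>
            (lat_le meet (mprod_pows mult e xs ks) e \<longleftrightarrow>
             lat_le meet (mprod_pows mult e xs ls) e))"
proof -
  interpret rotation_square_invariant mult e "\<lambda>z. lat_le meet z e"
    using HpsUL_star_omega_below_unit_invariant[OF assms] .
  show ?thesis
    using P_square_right P_mprod_pows_iff by blast
qed

end
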